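(* Let $n$ be odd. Let $X_1\sim\mathsf{Bernoulli}(p)$ and $X_k=X_{k-1}\oplus U_k$ for $k=2,\dots,n$, where $U_2,\dots,U_n$ are i.i.d. $\mathsf{Bernoulli}(r)$ independent of $X_1$; let $Y_k=X_k\oplus V_k$ for $k=1,\dots,n$, where $V_1,\dots,V_n$ are i.i.d. $\mathsf{Bernoulli}(\alpha)$ independent of $X^n$. Assume $p\in[\frac12,1)$, $\alpha\in(0,\frac12)$, $\bar\alpha\bar p>\alpha p$, and $\frac{r}{\bar r}<\left(\frac{\alpha}{\bar\alpha}\right)^{n-1}$. Let $$\zeta_n(\varepsilon)=\bar r\,\frac{\mathsf{P}_{\mathsf{c}}(X^n|Y^n)-\varepsilon^n}{p(\bar\alpha\bar r)^n-\bar p(\alpha\bar r)^n}.$$ Then there exists $\varepsilon_{\mathsf L}<\mathsf{P}_{\mathsf{c}}^{1/n}(X^n|Y^n)$ such that for every $\varepsilon\in[\varepsilon_{\mathsf L},\mathsf{P}_{\mathsf{c}}^{1/n}(X^n|Y^n)]$, $$1-\zeta_n(\varepsilon)\Pr(Y^n=\mathbf 1)\le\underline{\mathcal{h}}_n^n(\varepsilon)\le1-\zeta_n(\varepsilon)\alpha^n,$$ and the $2^n$-ary Z-channel $\mathsf{Z}_n(\zeta_n(\varepsilon))$ achieves the lower bound on this interval.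
   Context: $\bar a=1-a$; $\oplus$ is addition mod 2; $\mathsf{Bernoulli}(p)$ has $\Pr(\cdot=1)=p$. $\mathsf{P}_{\mathsf{c}}(X^n|Z^n)=\sum_{z^n}\max_{x^n}P_{X^nZ^n}(x^n,z^n)$. For $\varepsilon\in[\mathsf{P}_{\mathsf{c}}^{1/n}(X^n),\mathsf{P}_{\mathsf{c}}^{1/n}(X^n|Y^n)]$, $\underline{\mathcal{h}}_n(\varepsilon)=\sup\{\mathsf{P}_{\mathsf{c}}^{1/n}(Y^n|Z^n): P_{Z^n|Y^n},\ \mathcal{Z}^n=\{0,1\}^n,\ X^n - Y^n - Z^n,\ \mathsf{P}_{\mathsf{c}}^{1/n}(X^n|Z^n)\le\varepsilon\}$. $\mathbf 0=(0,\dots,0)$, $\mathbf 1=(1,\dots,1)$. The $2^n$-ary Z-channel $\mathsf{Z}_n(\gamma)$ on $\{0,1\}^n$ is given by $\mathsf{W}(y|y)=1$ for $y\ne\mathbf 1$, $\mathsf{W}(\mathbf 0|\mathbf 1)=\gamma$, $\mathsf{W}(\mathbf 1|\mathbf 1)=1-\gamma$; "achieves the lower bound" means it satisfies $\mathsf{P}_{\mathsf{c}}^{1/n}(X^n|Z^n)\le\varepsilon$ and $\mathsf{P}_{\mathsf{c}}(Y^n|Z^n)=1-\zeta_n(\varepsilon)\Pr(Y^n=\mathbf 1)$. *)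

theory Defs
  imports Complex_Main
begin

text \<open>Binary sequences of length n are represented as bool lists of length n
  (True = 1, False = 0).\<close>

definition seqs :: "nat \<Rightarrow> bool list set" where
  "seqs n = {xs. length xs = n}"

definition ones :: "nat \<Rightarrow> bool list" where
  "ones n = replicate n True"

definition zeros :: "nat \<Rightarrow> bool list" where
  "zeros n = replicate n False"

definition bern :: "real \<Rightarrow> bool \<Rightarrow> real" where
  "bern q b = (if b then q else 1 - q)"

text \<open>Law of X^n: X_1 ~ Bernoulli p, X_k = X_{k-1} xor U_k, U_k ~ Bernoulli r iid.\<close>
definition PX :: "nat \<Rightarrow> real \<Rightarrow> real \<Rightarrow> bool list \<Rightarrow> real" where
  "PX n p r x = bern p (x ! 0) * (\<Prod>k\<in>{1..<n}. bern r (x ! k \<noteq> x ! (k - 1)))"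

text \<open>Joint law of (X^n, Y^n), Y_k = X_k xor V_k, V_k ~ Bernoulli alpha iid.\<close>
definition PXY :: "nat \<Rightarrow> real \<Rightarrow> real \<Rightarrow> real \<Rightarrow> bool list \<Rightarrow> bool list \<Rightarrow> real" where
  "PXY n p r \<alpha> x y = PX n p r x * (\<Prod>k<n. bern \<alpha> (x ! k \<noteq> y ! k))"

definition PY :: "nat \<Rightarrow> real \<Rightarrow> real \<Rightarrow> real \<Rightarrow> bool list \<Rightarrow> real" where
  "PY n p r \<alpha> y = (\<Sum>x\<in>seqs n. PXY n p r \<alpha> x y)"

definition PcX :: "nat \<Rightarrow> real \<Rightarrow> real \<Rightarrow> real" where
  "PcX n p r = Max ((PX n p r) ` seqs n)"

definition PcXY :: "nat \<Rightarrow> real \<Rightarrow> real \<Rightarrow> real \<Rightarrow> real" where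
  "PcXY n p r \<alpha> = (\<Sum>y\<in>seqs n. Max ((\<lambda>x. PXY n p r \<alpha> x y) ` seqs n))"

text \<open>A channel P_{Z^n|Y^n} with Z^n in {0,1}^n: W y z = P(Z=z | Y=y).\<close>
definition is_channel :: "nat \<Rightarrow> (bool list \<Rightarrow> bool list \<Rightarrow> real) \<Rightarrow> bool" where
  "is_channel n W \<longleftrightarrow> (\<forall>y\<in>seqs n. (\<forall>z\<in>seqs n. 0 \<le> W y z) \<and> (\<Sum>z\<in>seqs n. W y z) = 1)"

text \<open>With X - Y - Z Markov: P(x,z) = sum_y P(x,y) W(z|y).\<close>
definition PcXZ :: "nat \<Rightarrow> real \<Rightarrow> real \<Rightarrow> real \<Rightarrow> (bool list \<Rightarrow> bool list \<Rightarrow> real) \<Rightarrow> real" where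
  "PcXZ n p r \<alpha> W = (\<Sum>z\<in>seqs n. Max ((\<lambda>x. \<Sum>y\<in>seqs n. PXY n p r \<alpha> x y * W y z) ` seqs n))"

definition PcYZ :: "nat \<Rightarrow> real \<Rightarrow> real \<Rightarrow> real \<Rightarrow> (bool list \<Rightarrow> bool list \<Rightarrow> real) \<Rightarrow> real" where
  "PcYZ n p r \<alpha> W = (\<Sum>z\<in>seqs n. Max ((\<lambda>y. PY n p r \<alpha> y * W y z) ` seqs n))"

definition hlow :: "nat \<Rightarrow> real \<Rightarrow> real \<Rightarrow> real \<Rightarrow> real \<Rightarrow> real" where
  "hlow n p r \<alpha> \<epsilon> = Sup {root n (PcYZ n p r \<alpha> W) | W. is_channel n W \<and> root n (PcXZ n p r \<alpha> W) \<le> \<epsilon>}"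

definition Zchan :: "nat \<Rightarrow> real \<Rightarrow> bool list \<Rightarrow> bool list \<Rightarrow> real" where
  "Zchan n \<gamma> y z =
     (if y \<noteq> ones n then (if z = y then 1 else 0)
      else if z = zeros n then \<gamma> else if z = ones n then 1 - \<gamma> else 0)"

definition zeta :: "nat \<Rightarrow> real \<Rightarrow> real \<Rightarrow> real \<Rightarrow> real \<Rightarrow> real" where
  "zeta n p r \<alpha> \<epsilon> = (1 - r) * (PcXY n p r \<alpha> - \<epsilon> ^ n)
      / (p * ((1 - \<alpha>) * (1 - r)) ^ n - (1 - p) * (\<alpha> * (1 - r)) ^ n)"

end

theory Submission
  imports Defs
begin

(* Write P(x,y) for the joint law of (X^n, Y^n) and Delta = P(1,1) - P(0,1).
   Under the hypothesis on r, every non-constant x satisfies P(x,y)^2 <= P(1,y) P(0,y),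
   so the MAP estimate of X^n from any y is one of the two constant sequences, and
   |P(1,y) - P(0,y)| <= Delta.  As P(y) >= alpha^n, this yields for every channel W
     PcXY - PcXZ(W) <= Delta / alpha^n * (1 - PcYZ(W)),
   which is the upper bound, since zeta_n(eps) = (PcXY - eps^n) / Delta.
   Conversely the Z-channel with parameter gamma lowers PcXZ by gamma Delta and PcYZ by
   gamma P(Y^n = 1), as long as gamma is small enough that the constant guesses stay
   optimal; gamma = zeta_n(eps) gives the lower bound for eps close to PcXY^(1/n). *)

lemma finite_seqs [simp]: "finite (seqs n)"
  using finite_lists_length_eq[of "UNIV :: bool set" n] by (simp add: seqs_def)

lemma ones_in_seqs [simp]: "ones n \<in> seqs n"
  and zeros_in_seqs [simp]: "zeros n \<in> seqs n"
  by (simp_all add: ones_def zeros_def seqs_def)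

lemma ones_neq_zeros: "0 < n \<Longrightarrow> ones n \<noteq> zeros n"
  by (cases n) (simp_all add: ones_def zeros_def)

lemma sum_seqs_Suc_Cons:
  "sum f (seqs (Suc n)) = (\<Sum>xs\<in>seqs n. f (True # xs) + f (False # xs))"
proof -
  have "seqs (Suc n) = Cons True ` seqs n \<union> Cons False ` seqs n"
    by (auto simp: seqs_def length_Suc_conv)
  then show ?thesis
    by (simp only:) (subst sum.union_disjoint, auto simp: sum.reindex sum.distrib)
qed

lemma sum_seqs_Suc_snoc:
  "sum f (seqs (Suc n)) = (\<Sum>xs\<in>seqs n. f (xs @ [True]) + f (xs @ [False]))"
proof -
  have "seqs (Suc n) = (\<lambda>xs. xs @ [True]) ` seqs n \<union> (\<lambda>xs. xs @ [False]) ` seqs n"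
    by (auto simp: seqs_def length_Suc_conv_rev image_iff)
  then show ?thesis
    by (simp only:) (subst sum.union_disjoint, auto simp: sum.reindex inj_on_def sum.distrib)
qed

lemma bern_not_add_bern: "bern a (\<not> b) + bern a b = 1"
  by (cases b) (simp_all add: bern_def)

lemma bern_nonneg: "0 \<le> a \<Longrightarrow> a \<le> 1 \<Longrightarrow> 0 \<le> bern a b"
  by (simp add: bern_def)

definition bsc :: "nat \<Rightarrow> real \<Rightarrow> bool list \<Rightarrow> bool list \<Rightarrow> real" where
  "bsc n a x y = (\<Prod>k<n. bern a (x ! k \<noteq> y ! k))"

lemma PXY_eq: "PXY n p r \<alpha> x y = PX n p r x * bsc n \<alpha> x y"
  by (simp add: PXY_def bsc_def)

lemma bsc_Cons: "bsc (Suc n) a (b # x) (c # y) = bern a (b \<noteq> c) * bsc n a x y"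
  unfolding bsc_def prod.lessThan_Suc_shift by simp

lemma sum_bsc_eq_1: "length x = n \<Longrightarrow> (\<Sum>y\<in>seqs n. bsc n a x y) = 1"
proof (induction n arbitrary: x)
  case 0
  then show ?case by (simp add: seqs_def bsc_def)
next
  case (Suc n)
  then obtain b x' where "x = b # x'" "length x' = n"
    by (metis length_Suc_conv)
  then show ?case
    using Suc.IH bern_not_add_bern[of a b]
    by (simp add: sum_seqs_Suc_Cons bsc_Cons flip: distrib_right)
qed

lemma bsc_bounds:
  assumes "0 \<le> a" "a \<le> 1/2"
  shows "a ^ n \<le> bsc n a x y" and "bsc n a x y \<le> (1 - a) ^ n"
proof -
  have "(\<Prod>k<n. a) \<le> bsc n a x y"
    unfolding bsc_def using assms by (intro prod_mono) (auto simp: bern_def)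
  moreover have "bsc n a x y \<le> (\<Prod>k<n. 1 - a)"
    unfolding bsc_def using assms by (intro prod_mono) (auto simp: bern_def)
  ultimately show "a ^ n \<le> bsc n a x y" "bsc n a x y \<le> (1 - a) ^ n"
    by simp_all
qed

lemma bsc_ones_times_bsc_zeros: "bsc n a (ones n) y * bsc n a (zeros n) y = (a * (1 - a)) ^ n"
proof -
  have "bsc n a (ones n) y * bsc n a (zeros n) y = (\<Prod>k<n. a * (1 - a))"
    unfolding bsc_def prod.distrib[symmetric]
    by (intro prod.cong) (auto simp: ones_def zeros_def bern_def)
  then show ?thesis by simp
qed

lemma bsc_ones_ones [simp]: "bsc n a (ones n) (ones n) = (1 - a) ^ n"
  and bsc_zeros_ones [simp]: "bsc n a (zeros n) (ones n) = a ^ n"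
  and bsc_ones_zeros [simp]: "bsc n a (ones n) (zeros n) = a ^ n"
  and bsc_zeros_zeros [simp]: "bsc n a (zeros n) (zeros n) = (1 - a) ^ n"
  by (simp_all add: bsc_def ones_def zeros_def bern_def)

lemma PX_nonneg: "0 \<le> p \<Longrightarrow> p \<le> 1 \<Longrightarrow> 0 \<le> r \<Longrightarrow> r \<le> 1 \<Longrightarrow> 0 \<le> PX n p r x"
  by (auto simp: PX_def intro!: mult_nonneg_nonneg prod_nonneg bern_nonneg)

lemma PX_replicate:
  assumes "0 < n"
  shows "PX n p r (replicate n b) = bern p b * (1 - r) ^ (n - 1)"
proof -
  have "(\<Prod>k\<in>{1..<n}. bern r (replicate n b ! k \<noteq> replicate n b ! (k - 1))) = (\<Prod>k\<in>{1..<n}. 1 - r)"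
    by (intro prod.cong) (auto simp: bern_def)
  then show ?thesis
    using assms by (simp add: PX_def)
qed

lemma PX_ones: "0 < n \<Longrightarrow> PX n p r (ones n) = p * (1 - r) ^ (n - 1)"
  and PX_zeros: "0 < n \<Longrightarrow> PX n p r (zeros n) = (1 - p) * (1 - r) ^ (n - 1)"
  by (simp_all add: ones_def zeros_def PX_replicate bern_def)

lemma PX_snoc:
  assumes "length x = Suc m"
  shows "PX (Suc (Suc m)) p r (x @ [b]) = PX (Suc m) p r x * bern r (b \<noteq> x ! m)"
proof -
  have "(\<Prod>k\<in>{1..<Suc m}. bern r ((x @ [b]) ! k \<noteq> (x @ [b]) ! (k - 1)))
      = (\<Prod>k\<in>{1..<Suc m}. bern r (x ! k \<noteq> x ! (k - 1)))"
    using assms by (intro prod.cong) (auto simp: nth_append)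
  then show ?thesis
    using assms by (simp add: PX_def prod.atLeastLessThan_Suc nth_append)
qed

lemma sum_PX_eq_1: "(\<Sum>x\<in>seqs (Suc m). PX (Suc m) p r x) = 1"
proof (induction m)
  case 0
  have "seqs 0 = {[]}" by (auto simp: seqs_def)
  then show ?case by (simp add: sum_seqs_Suc_Cons PX_def bern_def)
next
  case (Suc m)
  have "(\<Sum>x\<in>seqs (Suc (Suc m)). PX (Suc (Suc m)) p r x)
      = (\<Sum>x\<in>seqs (Suc m). PX (Suc m) p r x * (bern r (True \<noteq> x ! m) + bern r (False \<noteq> x ! m)))"
    by (subst sum_seqs_Suc_snoc, intro sum.cong) (auto simp: PX_snoc seqs_def algebra_simps)
  also have "\<dots> = 1"
    using Suc.IH by (simp add: bern_not_add_bern)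
  finally show ?case .
qed

lemma constant_if_no_switch:
  assumes "length x = n" "\<forall>k\<in>{1..<n}. x ! k = x ! (k - 1)"
  shows "x = replicate n (x ! 0)"
proof -
  have same: "k < n \<longrightarrow> x ! k = x ! 0" for k
  proof (induction k)
    case (Suc k)
    then show ?case
      using assms(2)[rule_format, of "Suc k"] by simp
  qed simp
  show ?thesis
  proof (rule nth_equalityI)
    fix i
    assume "i < length x"
    then show "x ! i = replicate n (x ! 0) ! i"
      using same[of i] assms(1) by simp
  qed (simp add: assms(1))
qed

lemma replicate_neq_if_nonconstant:
  "x \<noteq> ones n \<Longrightarrow> x \<noteq> zeros n \<Longrightarrow> x \<noteq> replicate n b"
  by (cases b) (simp_all add: ones_def zeros_def)

lemma nonconstant_length_ge_2:
  assumes "length x = n" "x \<noteq> ones n" "x \<noteq> zeros n"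
  shows "2 \<le> n"
proof (rule ccontr)
  assume "\<not> 2 \<le> n"
  then have "x = replicate n (x ! 0)"
    using assms(1) by (intro constant_if_no_switch) auto
  with assms(2,3) show False
    using replicate_neq_if_nonconstant by blast
qed

lemma PX_nonconstant_le:
  assumes x: "length x = n" "x \<noteq> ones n" "x \<noteq> zeros n"
    and p: "1/2 \<le> p" "p \<le> 1" and r: "0 \<le> r" "r \<le> 1/2"
  shows "PX n p r x \<le> p * r * (1 - r) ^ (n - 2)"
proof -
  have "\<not> (\<forall>k\<in>{1..<n}. x ! k = x ! (k - 1))"
  proof
    assume "\<forall>k\<in>{1..<n}. x ! k = x ! (k - 1)"
    then have "x = replicate n (x ! 0)"
      by (rule constant_if_no_switch[OF x(1)])
    with x(2,3) show False
      using replicate_neq_if_nonconstant by blast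
  qed
  then obtain j where j: "j \<in> {1..<n}" "x ! j \<noteq> x ! (j - 1)"
    by blast
  let ?f = "\<lambda>k. bern r (x ! k \<noteq> x ! (k - 1))"
  have "(\<Prod>k\<in>{1..<n}. ?f k) = ?f j * (\<Prod>k\<in>{1..<n} - {j}. ?f k)"
    using j by (intro prod.remove) auto
  also have "\<dots> \<le> r * (\<Prod>k\<in>{1..<n} - {j}. 1 - r)"
  proof -
    have "?f j = r"
      using j by (simp add: bern_def)
    moreover have "(\<Prod>k\<in>{1..<n} - {j}. ?f k) \<le> (\<Prod>k\<in>{1..<n} - {j}. 1 - r)"
      using r by (intro prod_mono) (auto simp: bern_def)
    ultimately show ?thesis
      using r by (simp add: mult_left_mono)
  qed
  also have "\<dots> = r * (1 - r) ^ (n - 2)"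
    using j by (simp add: card_Diff_singleton numeral_2_eq_2)
  finally have "(\<Prod>k\<in>{1..<n}. ?f k) \<le> r * (1 - r) ^ (n - 2)" .
  moreover have "bern p (x ! 0) \<le> p" "0 \<le> (\<Prod>k\<in>{1..<n}. ?f k)"
    using p r by (auto simp: bern_def intro!: prod_nonneg)
  ultimately have "bern p (x ! 0) * (\<Prod>k\<in>{1..<n}. ?f k) \<le> p * (r * (1 - r) ^ (n - 2))"
    using p by (intro mult_mono) auto
  then show ?thesis
    by (simp add: PX_def mult.assoc)
qed

lemma odd_root_le_iff: "odd n \<Longrightarrow> root n x \<le> y \<longleftrightarrow> x \<le> y ^ n"
  using real_root_le_iff[of n x "y ^ n"] by (simp add: odd_real_root_power_cancel odd_pos)

lemma le_odd_root_iff: "odd n \<Longrightarrow> y \<le> root n x \<longleftrightarrow> y ^ n \<le> x"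
  using real_root_le_iff[of n "y ^ n" x] by (simp add: odd_real_root_power_cancel odd_pos)

lemma hlow_pow_bounds:
  assumes n: "odd n"
    and W0: "is_channel n W0" "PcXZ n p r \<alpha> W0 \<le> \<epsilon> ^ n"
    and bound: "\<And>W. is_channel n W \<Longrightarrow> PcXZ n p r \<alpha> W \<le> \<epsilon> ^ n \<Longrightarrow> PcYZ n p r \<alpha> W \<le> B"
  shows "PcYZ n p r \<alpha> W0 \<le> hlow n p r \<alpha> \<epsilon> ^ n" and "hlow n p r \<alpha> \<epsilon> ^ n \<le> B"
proof -
  define T where
    "T = {root n (PcYZ n p r \<alpha> W) | W. is_channel n W \<and> root n (PcXZ n p r \<alpha> W) \<le> \<epsilon>}"
  have hlow: "hlow n p r \<alpha> \<epsilon> = Sup T"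
    by (simp add: hlow_def T_def)
  have ub: "t \<le> root n B" if "t \<in> T" for t
    using that bound n by (auto simp: T_def odd_root_le_iff odd_real_root_pow odd_pos)
  have W0_in: "root n (PcYZ n p r \<alpha> W0) \<in> T"
    using W0 n by (auto simp: T_def odd_root_le_iff)
  have "root n (PcYZ n p r \<alpha> W0) \<le> Sup T"
    using W0_in ub by (intro cSup_upper bdd_aboveI) auto
  moreover have "Sup T \<le> root n B"
    using W0_in ub by (intro cSup_least) auto
  ultimately show "PcYZ n p r \<alpha> W0 \<le> hlow n p r \<alpha> \<epsilon> ^ n" "hlow n p r \<alpha> \<epsilon> ^ n \<le> B"
    using n by (simp_all add: hlow odd_root_le_iff le_odd_root_iff)
qed

locale markov_bsc =
  fixes n :: nat and p r \<alpha> :: real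
  assumes odd_n: "odd n"
    and p_ge: "1/2 \<le> p" and p_less: "p < 1"
    and \<alpha>_pos: "0 < \<alpha>" and \<alpha>_less: "\<alpha> < 1/2"
    and r_nonneg: "0 \<le> r" and r_less: "r < 1"
    and \<alpha>_p_less: "(1 - \<alpha>) * (1 - p) > \<alpha> * p"
    and r_small: "r / (1 - r) < (\<alpha> / (1 - \<alpha>)) ^ (n - 1)"
begin

abbreviation "S \<equiv> seqs n"
abbreviation "One \<equiv> ones n"
abbreviation "Ze \<equiv> zeros n"
abbreviation "P \<equiv> PXY n p r \<alpha>"
abbreviation "Py \<equiv> PY n p r \<alpha>"

lemma n_pos: "0 < n"
  using odd_n by (rule odd_pos)

lemma S_nonempty: "S \<noteq> {}"
  using ones_in_seqs by blast

lemma One_neq_Ze: "One \<noteq> Ze"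
  using n_pos by (rule ones_neq_zeros)

lemma r_le_half: "r \<le> 1/2"
proof -
  have "(\<alpha> / (1 - \<alpha>)) ^ (n - 1) \<le> 1"
    using \<alpha>_pos \<alpha>_less by (intro power_le_one) auto
  with r_small have "r / (1 - r) < 1"
    by linarith
  with r_less show ?thesis
    by (simp add: divide_less_eq)
qed

lemma bsc_\<alpha>_bounds: "\<alpha> ^ n \<le> bsc n \<alpha> x y" "bsc n \<alpha> x y \<le> (1 - \<alpha>) ^ n"
  using \<alpha>_pos \<alpha>_less by (simp_all add: bsc_bounds less_imp_le)

lemma bsc_\<alpha>_nonneg: "0 \<le> bsc n \<alpha> x y"
  using bsc_\<alpha>_bounds(1) \<alpha>_pos by (meson order.trans zero_le_power less_imp_le)

lemma P_nonneg: "0 \<le> P x y"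
  using p_ge p_less r_nonneg r_less by (simp add: PXY_eq PX_nonneg bsc_\<alpha>_nonneg)

lemma P_ones: "P One y = p * (1 - r) ^ (n - 1) * bsc n \<alpha> One y"
  and P_zeros: "P Ze y = (1 - p) * (1 - r) ^ (n - 1) * bsc n \<alpha> Ze y"
  by (simp_all add: PXY_eq PX_ones PX_zeros n_pos)

lemma prior_times_noise_less: "0 < k \<Longrightarrow> p * \<alpha> ^ k < (1 - p) * (1 - \<alpha>) ^ k"
proof -
  assume "0 < k"
  then obtain j where k: "k = Suc j" by (cases k) auto
  have "\<alpha> ^ j \<le> (1 - \<alpha>) ^ j"
    using \<alpha>_pos \<alpha>_less by (intro power_mono) auto
  moreover have "p * \<alpha> < (1 - p) * (1 - \<alpha>)"
    using \<alpha>_p_less by (simp add: mult.commute)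
  ultimately have "(p * \<alpha>) * \<alpha> ^ j < ((1 - p) * (1 - \<alpha>)) * (1 - \<alpha>) ^ j"
    using \<alpha>_pos p_ge by (auto intro: mult_less_le_imp_less)
  then show ?thesis
    by (simp add: k algebra_simps)
qed

definition \<Delta> :: real where
  "\<Delta> = P One One - P Ze One"

lemma \<Delta>_eq: "\<Delta> = (1 - r) ^ (n - 1) * (p * (1 - \<alpha>) ^ n - (1 - p) * \<alpha> ^ n)"
  by (simp add: \<Delta>_def P_ones P_zeros algebra_simps)

lemma \<Delta>_pos: "0 < \<Delta>"
proof -
  have "(1 - p) * \<alpha> ^ n \<le> p * \<alpha> ^ n"
    using p_ge \<alpha>_pos by (intro mult_right_mono) auto
  also have "\<dots> < p * (1 - \<alpha>) ^ n"
    using p_ge \<alpha>_pos \<alpha>_less n_pos by (intro mult_strict_left_mono power_strict_mono) auto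
  finally show ?thesis
    using r_less by (simp add: \<Delta>_eq)
qed

lemma abs_P_ones_minus_P_zeros_le: "\<bar>P One y - P Ze y\<bar> \<le> \<Delta>"
proof -
  let ?A = "bsc n \<alpha> One y" and ?B = "bsc n \<alpha> Ze y"
  have "p * ?A \<le> p * (1 - \<alpha>) ^ n" "p * \<alpha> ^ n \<le> p * ?A"
    "(1 - p) * ?B \<le> (1 - p) * (1 - \<alpha>) ^ n" "(1 - p) * \<alpha> ^ n \<le> (1 - p) * ?B"
    using bsc_\<alpha>_bounds p_ge p_less by (simp_all add: mult_left_mono)
  moreover have "(1 - p) * (1 - \<alpha>) ^ n \<le> p * (1 - \<alpha>) ^ n" "(1 - p) * \<alpha> ^ n \<le> p * \<alpha> ^ n"
    using p_ge \<alpha>_pos \<alpha>_less by (simp_all add: mult_right_mono)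
  ultimately have "\<bar>p * ?A - (1 - p) * ?B\<bar> \<le> p * (1 - \<alpha>) ^ n - (1 - p) * \<alpha> ^ n"
    by linarith
  then have "(1 - r) ^ (n - 1) * \<bar>p * ?A - (1 - p) * ?B\<bar> \<le> \<Delta>"
    unfolding \<Delta>_eq using r_less by (intro mult_left_mono) auto
  moreover have "P One y - P Ze y = (1 - r) ^ (n - 1) * (p * ?A - (1 - p) * ?B)"
    by (simp add: P_ones P_zeros algebra_simps)
  ultimately show ?thesis
    using r_less by (simp add: abs_mult)
qed

lemma crossover_bound:
  assumes "3 \<le> n"
  shows "p * r\<^sup>2 * (1 - \<alpha>) ^ n \<le> (1 - p) * (1 - r)\<^sup>2 * \<alpha> ^ n"
proof -
  define m where "m = n - 2"
  have n: "n = m + 2" and m: "0 < m"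
    using assms by (simp_all add: m_def)
  have "r / (1 - r) < (\<alpha> / (1 - \<alpha>)) ^ (m + 1)"
    using r_small by (simp add: n)
  then have "r * (1 - \<alpha>) ^ (m + 1) < (1 - r) * \<alpha> ^ (m + 1)"
    using r_less \<alpha>_less by (simp add: power_divide divide_less_eq less_divide_eq mult.commute)
  then have sq: "(r * (1 - \<alpha>) ^ (m + 1))\<^sup>2 \<le> ((1 - r) * \<alpha> ^ (m + 1))\<^sup>2"
    using r_nonneg \<alpha>_less by (intro power_mono) auto
  have prior: "p * \<alpha> ^ m \<le> (1 - p) * (1 - \<alpha>) ^ m"
    using prior_times_noise_less[OF m] by simp
  have "(p * r\<^sup>2 * (1 - \<alpha>) ^ n) * (\<alpha> * (1 - \<alpha>)) ^ m = (r * (1 - \<alpha>) ^ (m + 1))\<^sup>2 * (p * \<alpha> ^ m)"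
    by (simp add: n power2_eq_square power_mult_distrib power_add mult_ac)
  also have "\<dots> \<le> ((1 - r) * \<alpha> ^ (m + 1))\<^sup>2 * ((1 - p) * (1 - \<alpha>) ^ m)"
    using p_ge \<alpha>_pos by (intro mult_mono[OF sq prior]) auto
  also have "\<dots> = ((1 - p) * (1 - r)\<^sup>2 * \<alpha> ^ n) * (\<alpha> * (1 - \<alpha>)) ^ m"
    by (simp add: n power2_eq_square power_mult_distrib power_add mult_ac)
  finally show ?thesis
    using \<alpha>_pos \<alpha>_less by (simp add: mult_le_cancel_right)
qed

lemma P_nonconstant_sq_le:
  assumes x: "x \<in> S" "x \<noteq> One" "x \<noteq> Ze"
  shows "(P x y)\<^sup>2 \<le> P One y * P Ze y"
proof -
  have "2 \<le> n"
    using x by (intro nonconstant_length_ge_2) (auto simp: seqs_def)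
  moreover have "n \<noteq> 2"
    using odd_n by auto
  ultimately obtain m where n: "n = m + 3"
    using le_Suc_ex[of 3 n] by fastforce
  define K where "K = p * r * (1 - r) ^ (m + 1) * (1 - \<alpha>) ^ n"
  have "P x y \<le> K"
  proof -
    have "PX n p r x \<le> p * r * (1 - r) ^ (m + 1)"
      using PX_nonconstant_le[of x n p r] x p_ge p_less r_nonneg r_le_half by (simp add: seqs_def n)
    then show ?thesis
      unfolding PXY_eq K_def using bsc_\<alpha>_bounds bsc_\<alpha>_nonneg p_ge r_nonneg r_less
      by (intro mult_mono) auto
  qed
  then have "(P x y)\<^sup>2 \<le> K\<^sup>2"
    using P_nonneg by (intro power_mono)
  also have "K\<^sup>2 = (p * r\<^sup>2 * (1 - \<alpha>) ^ n) * (p * ((1 - r) ^ (m + 1))\<^sup>2 * (1 - \<alpha>) ^ n)"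
    by (simp add: K_def power2_eq_square mult_ac)
  also have "\<dots> \<le> ((1 - p) * (1 - r)\<^sup>2 * \<alpha> ^ n) * (p * ((1 - r) ^ (m + 1))\<^sup>2 * (1 - \<alpha>) ^ n)"
    using crossover_bound p_ge \<alpha>_less by (intro mult_right_mono) (auto simp: n)
  also have "\<dots> = p * (1 - p) * ((1 - r) ^ (n - 1))\<^sup>2 * (\<alpha> * (1 - \<alpha>)) ^ n"
    by (simp add: n power2_eq_square power_mult_distrib mult_ac)
  also have "\<dots> = P One y * P Ze y"
    by (simp add: P_ones P_zeros power2_eq_square mult_ac flip: bsc_ones_times_bsc_zeros)
  finally show ?thesis .
qed

lemma Max_P_eq: "Max ((\<lambda>x. P x y) ` S) = max (P Ze y) (P One y)"
proof (rule Max_eqI)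
  show "max (P Ze y) (P One y) \<in> (\<lambda>x. P x y) ` S"
    by (simp add: max_def)
next
  fix v
  assume "v \<in> (\<lambda>x. P x y) ` S"
  then obtain x where x: "x \<in> S" and v: "v = P x y"
    by blast
  let ?M = "max (P Ze y) (P One y)"
  show "v \<le> ?M"
  proof (cases "x = One \<or> x = Ze")
    case False
    have M_nonneg: "0 \<le> ?M"
      using P_nonneg[of Ze y] by (simp add: le_max_iff_disj)
    then have "P One y * P Ze y \<le> ?M * ?M"
      using P_nonneg by (intro mult_mono) auto
    then have "(P x y)\<^sup>2 \<le> ?M\<^sup>2"
      using P_nonconstant_sq_le[of x y] x False by (simp add: power2_eq_square)
    with M_nonneg show ?thesis
      using v by (auto intro: power2_le_imp_le)
  qed (use v in auto)
qed simp

lemma P_less_P_Ze_Ze: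
  assumes "x \<in> S" "x \<noteq> Ze"
  shows "P x Ze < P Ze Ze"
proof -
  have One_less: "P One Ze < P Ze Ze"
    using prior_times_noise_less[OF n_pos] r_less by (simp add: P_ones P_zeros mult_ac)
  show ?thesis
  proof (cases "x = One")
    case False
    have "(P x Ze)\<^sup>2 \<le> P One Ze * P Ze Ze"
      using P_nonconstant_sq_le assms False by blast
    also have "\<dots> < (P Ze Ze)\<^sup>2"
      using One_less P_nonneg[of One Ze] by (simp add: power2_eq_square mult_strict_right_mono)
    finally show ?thesis
      using P_nonneg by (auto intro: power_less_imp_less_base)
  qed (use One_less in simp)
qed

lemma Max_P_One: "Max ((\<lambda>x. P x One) ` S) = P One One"
  using \<Delta>_pos by (simp add: Max_P_eq \<Delta>_def)

lemma Max_P_Ze: "Max ((\<lambda>x. P x Ze) ` S) = P Ze Ze"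
  using P_less_P_Ze_Ze[of One] One_neq_Ze by (simp add: Max_P_eq)

lemma sum_PX: "(\<Sum>x\<in>S. PX n p r x) = 1"
  using sum_PX_eq_1[of "n - 1" p r] n_pos by simp

lemma sum_P_eq_PX:
  assumes "x \<in> S"
  shows "(\<Sum>y\<in>S. P x y) = PX n p r x"
proof -
  have "length x = n"
    using assms by (simp add: seqs_def)
  then show ?thesis
    by (simp add: PXY_eq sum_bsc_eq_1 flip: sum_distrib_left)
qed

lemma \<alpha>_pow_le_Py: "\<alpha> ^ n \<le> Py y"
proof -
  have "\<alpha> ^ n = (\<Sum>x\<in>S. PX n p r x * \<alpha> ^ n)"
    by (simp add: sum_PX flip: sum_distrib_right)
  also have "\<dots> \<le> Py y"
    unfolding PY_def PXY_eq using bsc_\<alpha>_bounds p_ge p_less r_nonneg r_less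
    by (intro sum_mono mult_left_mono) (auto intro: PX_nonneg)
  finally show ?thesis .
qed

lemma Py_nonneg: "0 \<le> Py y"
  using \<alpha>_pow_le_Py[of y] \<alpha>_pos by (meson order.trans zero_le_power less_imp_le)

lemma sum_Py: "(\<Sum>y\<in>S. Py y) = 1"
  unfolding PY_def by (subst sum.swap) (simp add: sum_P_eq_PX sum_PX)

lemma Py_le_1: "y \<in> S \<Longrightarrow> Py y \<le> 1"
  using member_le_sum[of y S Py] Py_nonneg sum_Py by simp

lemma P_le_Py: "x \<in> S \<Longrightarrow> P x y \<le> Py y"
  unfolding PY_def using P_nonneg by (intro member_le_sum) auto

text \<open>Given the output \<open>z\<close>, guess the MAP estimate of \<open>X\<^sup>n\<close> for the most likely input \<open>y\<^sub>1\<close> of \<open>z\<close>: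
  this is exact at \<open>y\<^sub>1\<close>, and at every other \<open>y\<close> it loses at most \<open>\<Delta> \<le> \<Delta> / \<alpha>\<^sup>n \<cdot> P(y)\<close>.\<close>

lemma column_gap_le:
  assumes W: "is_channel n W" and z: "z \<in> S"
  shows "(\<Sum>y\<in>S. W y z * Max ((\<lambda>x. P x y) ` S)) - Max ((\<lambda>x. \<Sum>y\<in>S. P x y * W y z) ` S)
    \<le> \<Delta> / \<alpha> ^ n * ((\<Sum>y\<in>S. Py y * W y z) - Max ((\<lambda>y. Py y * W y z) ` S))"
proof -
  define D where "D = \<Delta> / \<alpha> ^ n"
  have D_Py: "\<Delta> \<le> D * Py y" for y
    using \<alpha>_pow_le_Py[of y] \<Delta>_pos \<alpha>_pos by (simp add: D_def field_simps)
  have W_nonneg: "y \<in> S \<Longrightarrow> 0 \<le> W y z" for y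
    using W z by (simp add: is_channel_def)
  have "Max ((\<lambda>y. Py y * W y z) ` S) \<in> (\<lambda>y. Py y * W y z) ` S"
    using S_nonempty by (intro Max_in) auto
  then obtain y1 where y1: "y1 \<in> S" "Max ((\<lambda>y. Py y * W y z) ` S) = Py y1 * W y1 z"
    by blast
  define c where "c = (if P Ze y1 \<le> P One y1 then One else Ze)"
  have c_max: "Max ((\<lambda>x. P x y1) ` S) = P c y1"
    by (simp add: Max_P_eq c_def max_def)
  have "(\<Sum>y\<in>S. P c y * W y z) \<le> Max ((\<lambda>x. \<Sum>y\<in>S. P x y * W y z) ` S)"
    by (intro Max_ge) (auto simp: c_def)
  moreover have "W y z * Max ((\<lambda>x. P x y) ` S) - P c y * W y z
      \<le> D * Py y * W y z - (if y = y1 then D * Py y1 * W y1 z else 0)" if "y \<in> S" for y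
  proof (cases "y = y1")
    case False
    have "Max ((\<lambda>x. P x y) ` S) - P c y \<le> \<Delta>"
      using abs_P_ones_minus_P_zeros_le[of y] by (auto simp: Max_P_eq c_def max_def)
    then have "W y z * (Max ((\<lambda>x. P x y) ` S) - P c y) \<le> W y z * (D * Py y)"
      using D_Py[of y] W_nonneg[OF that] by (intro mult_left_mono) auto
    then show ?thesis
      using False by (simp add: algebra_simps)
  qed (simp add: c_max algebra_simps)
  then have "(\<Sum>y\<in>S. W y z * Max ((\<lambda>x. P x y) ` S) - P c y * W y z)
      \<le> (\<Sum>y\<in>S. D * Py y * W y z - (if y = y1 then D * Py y1 * W y1 z else 0))"
    by (intro sum_mono)
  ultimately show ?thesis
    using y1 by (simp add: sum_subtractf sum_distrib_left y1 D_def[symmetric] algebra_simps)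
qed

lemma PcXY_minus_PcXZ_le:
  assumes W: "is_channel n W"
  shows "PcXY n p r \<alpha> - PcXZ n p r \<alpha> W \<le> \<Delta> / \<alpha> ^ n * (1 - PcYZ n p r \<alpha> W)"
proof -
  have rows: "y \<in> S \<Longrightarrow> (\<Sum>z\<in>S. W y z) = 1" for y
    using W by (simp add: is_channel_def)
  have XY: "(\<Sum>z\<in>S. \<Sum>y\<in>S. W y z * Max ((\<lambda>x. P x y) ` S)) = PcXY n p r \<alpha>"
    by (subst sum.swap) (simp add: PcXY_def rows flip: sum_distrib_right)
  have Y: "(\<Sum>z\<in>S. \<Sum>y\<in>S. Py y * W y z) = 1"
    by (subst sum.swap) (simp add: rows sum_Py flip: sum_distrib_left)
  have "(\<Sum>z\<in>S. (\<Sum>y\<in>S. W y z * Max ((\<lambda>x. P x y) ` S)) - Max ((\<lambda>x. \<Sum>y\<in>S. P x y * W y z) ` S))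
    \<le> (\<Sum>z\<in>S. \<Delta> / \<alpha> ^ n * ((\<Sum>y\<in>S. Py y * W y z) - Max ((\<lambda>y. Py y * W y z) ` S)))"
    using column_gap_le[OF W] by (intro sum_mono)
  then show ?thesis
    by (simp only: PcXZ_def PcYZ_def sum_subtractf XY Y flip: sum_distrib_left)
qed

definition zgap :: real where
  "zgap = P Ze Ze - Max ((\<lambda>x. P x Ze) ` (S - {Ze}))"

lemma zgap_pos: "0 < zgap"
proof -
  have "(\<lambda>x. P x Ze) ` (S - {Ze}) \<noteq> {}"
    using One_neq_Ze ones_in_seqs by blast
  then have "Max ((\<lambda>x. P x Ze) ` (S - {Ze})) \<in> (\<lambda>x. P x Ze) ` (S - {Ze})"
    by (intro Max_in) simp_all
  then obtain x where "x \<in> S" "x \<noteq> Ze" "Max ((\<lambda>x. P x Ze) ` (S - {Ze})) = P x Ze"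
    by blast
  then show ?thesis
    using P_less_P_Ze_Ze[of x] by (simp add: zgap_def)
qed

lemma P_add_zgap_le: "x \<in> S \<Longrightarrow> x \<noteq> Ze \<Longrightarrow> P x Ze + zgap \<le> P Ze Ze"
  unfolding zgap_def by (simp add: Max_ge)

lemma Zchan_is_channel: "0 \<le> \<gamma> \<Longrightarrow> \<gamma> \<le> 1 \<Longrightarrow> is_channel n (Zchan n \<gamma>)"
proof (unfold is_channel_def, intro ballI conjI)
  fix y
  assume "y \<in> S"
  show "(\<Sum>z\<in>S. Zchan n \<gamma> y z) = 1"
  proof (cases "y = One")
    case True
    have "(\<Sum>z\<in>S. Zchan n \<gamma> y z) = (\<Sum>z\<in>S. (if z = Ze then \<gamma> else 0) + (if z = One then 1 - \<gamma> else 0))"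
      using True One_neq_Ze by (intro sum.cong) (auto simp: Zchan_def)
    then show ?thesis
      by (simp add: sum.distrib)
  next
    case False
    then have "(\<Sum>z\<in>S. Zchan n \<gamma> y z) = (\<Sum>z\<in>S. if y = z then 1 else 0)"
      by (intro sum.cong) (auto simp: Zchan_def)
    then show ?thesis
      using \<open>y \<in> S\<close> by simp
  qed
qed (auto simp: Zchan_def)

lemma sum_P_Zchan:
  assumes "z \<in> S"
  shows "(\<Sum>y\<in>S. P x y * Zchan n \<gamma> y z)
    = (if z = One then 0 else P x z) + P x One * (if z = Ze then \<gamma> else if z = One then 1 - \<gamma> else 0)"
proof -
  have "(\<Sum>y\<in>S. P x y * Zchan n \<gamma> y z) = P x One * Zchan n \<gamma> One z + (\<Sum>y\<in>S - {One}. P x y * Zchan n \<gamma> y z)"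
    by (rule sum.remove) simp_all
  also have "(\<Sum>y\<in>S - {One}. P x y * Zchan n \<gamma> y z) = (\<Sum>y\<in>S - {One}. if z = y then P x y else 0)"
    by (intro sum.cong) (auto simp: Zchan_def)
  also have "\<dots> = (if z = One then 0 else P x z)"
    using assms by (simp add: sum.delta)
  finally show ?thesis
    by (simp add: Zchan_def)
qed

text \<open>Routing a \<open>\<gamma>\<close>-fraction of \<open>y = 1\<close> to \<open>z = 0\<close> costs the guess \<open>x = 1\<close> the mass \<open>\<gamma> P(1,1)\<close>
  and credits the guess \<open>x = 0\<close> only \<open>\<gamma> P(0,1)\<close>; for \<open>\<gamma> \<le> zgap\<close> the guess at \<open>z = 0\<close> stays \<open>x = 0\<close>.\<close>

lemma PcXZ_Zchan_le:
  assumes "0 \<le> \<gamma>" "\<gamma> \<le> 1" "\<gamma> \<le> zgap"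
  shows "PcXZ n p r \<alpha> (Zchan n \<gamma>) \<le> PcXY n p r \<alpha> - \<gamma> * \<Delta>"
proof -
  let ?b = "\<lambda>z. Max ((\<lambda>x. P x z) ` S) - (if z = One then \<gamma> * P One One else 0)
    + (if z = Ze then \<gamma> * P Ze One else 0)"
  have "Max ((\<lambda>x. \<Sum>y\<in>S. P x y * Zchan n \<gamma> y z) ` S) \<le> ?b z" if z: "z \<in> S" for z
  proof (rule Max.boundedI)
    fix v
    assume "v \<in> (\<lambda>x. \<Sum>y\<in>S. P x y * Zchan n \<gamma> y z) ` S"
    then obtain x where x: "x \<in> S"
      and v: "v = (if z = One then 0 else P x z) + P x One * (if z = Ze then \<gamma> else if z = One then 1 - \<gamma> else 0)"
      using sum_P_Zchan[OF z] by auto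
    consider "z = One" | "z = Ze" | "z \<noteq> One" "z \<noteq> Ze"
      by blast
    then show "v \<le> ?b z"
    proof cases
      case 1
      have "P x One * (1 - \<gamma>) \<le> P One One * (1 - \<gamma>)"
        using x assms Max_P_One Max_ge[of "(\<lambda>x. P x One) ` S" "P x One"]
        by (intro mult_right_mono) auto
      then show ?thesis
        using 1 v One_neq_Ze by (simp add: Max_P_One algebra_simps)
    next
      case 2
      have "P x Ze + \<gamma> * P x One \<le> P Ze Ze + \<gamma> * P Ze One"
      proof (cases "x = Ze")
        case False
        have "P x One \<le> 1"
          using P_le_Py[OF x, of One] Py_le_1[of One] by simp
        then have "\<gamma> * P x One \<le> zgap"
          using assms by (meson mult_left_le order.trans)
        then show ?thesis
          using P_add_zgap_le[OF x False] assms P_nonneg[of Ze One] by (simp add: add_increasing2)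
      qed simp
      then show ?thesis
        using 2 v One_neq_Ze by (simp add: Max_P_Ze algebra_simps)
    next
      case 3
      then show ?thesis
        using v x by (simp add: Max_ge)
    qed
  qed (use S_nonempty in auto)
  then have "PcXZ n p r \<alpha> (Zchan n \<gamma>) \<le> (\<Sum>z\<in>S. ?b z)"
    unfolding PcXZ_def by (intro sum_mono)
  also have "\<dots> = PcXY n p r \<alpha> - \<gamma> * \<Delta>"
    by (simp add: sum.distrib sum_subtractf PcXY_def \<Delta>_def algebra_simps)
  finally show ?thesis .
qed

lemma PcYZ_Zchan:
  assumes "0 \<le> \<gamma>" "\<gamma> \<le> \<alpha> ^ n"
  shows "PcYZ n p r \<alpha> (Zchan n \<gamma>) = 1 - \<gamma> * Py One"
proof -
  have "\<alpha> ^ n \<le> 1"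
    using \<alpha>_pos \<alpha>_less by (intro power_le_one) auto
  with assms have "\<gamma> \<le> 1"
    by linarith
  have "Max ((\<lambda>y. Py y * Zchan n \<gamma> y z) ` S) = Py z - (if z = One then \<gamma> * Py One else 0)"
    if z: "z \<in> S" for z
  proof (rule Max_eqI)
    show "Py z - (if z = One then \<gamma> * Py One else 0) \<in> (\<lambda>y. Py y * Zchan n \<gamma> y z) ` S"
      using z One_neq_Ze by (intro image_eqI[where x = z]) (auto simp: Zchan_def algebra_simps)
  next
    fix v
    assume "v \<in> (\<lambda>y. Py y * Zchan n \<gamma> y z) ` S"
    then obtain y where "y \<in> S" and v: "v = Py y * Zchan n \<gamma> y z"
      by blast
    have "\<gamma> * Py One \<le> \<alpha> ^ n"
      using assms Py_le_1[of One] by (meson mult_left_le order.trans ones_in_seqs)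
    moreover have "\<gamma> * Py One \<le> Py One"
      using Py_nonneg assms(1) \<open>\<gamma> \<le> 1\<close> by (rule mult_left_le_one_le)
    ultimately show "v \<le> Py z - (if z = One then \<gamma> * Py One else 0)"
      using v \<alpha>_pow_le_Py[of z] Py_nonneg[of z] Py_nonneg[of y] \<open>\<gamma> \<le> 1\<close> assms One_neq_Ze
      by (auto simp: Zchan_def algebra_simps mult_left_le_one_le)
  qed simp
  then have "PcYZ n p r \<alpha> (Zchan n \<gamma>) = (\<Sum>z\<in>S. Py z - (if z = One then \<gamma> * Py One else 0))"
    unfolding PcYZ_def by (intro sum.cong) auto
  then show ?thesis
    by (simp add: sum_subtractf sum_Py)
qed

lemma PcX_less_PcXY: "PcX n p r < PcXY n p r \<alpha>"
proof -
  have "PcX n p r \<in> PX n p r ` S"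
    unfolding PcX_def using S_nonempty by (intro Max_in) auto
  then obtain x where x: "x \<in> S" "PcX n p r = PX n p r x"
    by blast
  have "\<exists>y\<in>S. P x y < Max ((\<lambda>x. P x y) ` S)"
  proof (cases "x = Ze")
    case True
    then show ?thesis
      using \<Delta>_pos ones_in_seqs by (metis Max_P_One \<Delta>_def diff_gt_0_iff_gt)
  next
    case False
    then show ?thesis
      using P_less_P_Ze_Ze[OF x(1)] zeros_in_seqs by (metis Max_P_Ze)
  qed
  then have "(\<Sum>y\<in>S. P x y) < (\<Sum>y\<in>S. Max ((\<lambda>x. P x y) ` S))"
    using x(1) by (intro sum_strict_mono_ex1) auto
  then show ?thesis
    using sum_P_eq_PX[OF x(1)] x(2) by (simp add: PcXY_def)
qed

lemma zeta_eq: "zeta n p r \<alpha> \<epsilon> = (PcXY n p r \<alpha> - \<epsilon> ^ n) / \<Delta>"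
proof -
  have pow: "(1 - r) ^ n = (1 - r) * (1 - r) ^ (n - 1)"
    using n_pos by (simp flip: power_Suc)
  have "p * ((1 - \<alpha>) * (1 - r)) ^ n - (1 - p) * (\<alpha> * (1 - r)) ^ n = (1 - r) * \<Delta>"
    unfolding \<Delta>_eq power_mult_distrib pow by (simp add: algebra_simps)
  then show ?thesis
    using r_less by (simp add: zeta_def)
qed

definition \<gamma>_max :: real where
  "\<gamma>_max = min (\<alpha> ^ n) (min zgap ((PcXY n p r \<alpha> - PcX n p r) / \<Delta>))"

lemma \<gamma>_max_pos: "0 < \<gamma>_max"
  using \<alpha>_pos zgap_pos PcX_less_PcXY \<Delta>_pos by (simp add: \<gamma>_max_def)

lemma Zchan_zeta_sandwich:
  assumes \<epsilon>: "root n (PcXY n p r \<alpha> - \<gamma>_max * \<Delta>) \<le> \<epsilon>" "\<epsilon> \<le> root n (PcXY n p r \<alpha>)"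
  defines "\<gamma> \<equiv> zeta n p r \<alpha> \<epsilon>"
  shows "1 - \<gamma> * Py One \<le> hlow n p r \<alpha> \<epsilon> ^ n"
    and "hlow n p r \<alpha> \<epsilon> ^ n \<le> 1 - \<gamma> * \<alpha> ^ n"
    and "is_channel n (Zchan n \<gamma>)"
    and "root n (PcXZ n p r \<alpha> (Zchan n \<gamma>)) \<le> \<epsilon>"
    and "PcYZ n p r \<alpha> (Zchan n \<gamma>) = 1 - \<gamma> * Py One"
proof -
  have \<gamma>\<Delta>: "\<gamma> * \<Delta> = PcXY n p r \<alpha> - \<epsilon> ^ n"
    using \<Delta>_pos by (simp add: \<gamma>_def zeta_eq)
  have "0 \<le> \<gamma> * \<Delta>" "\<gamma> * \<Delta> \<le> \<gamma>_max * \<Delta>"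
    using \<epsilon> odd_n by (simp_all add: \<gamma>\<Delta> le_odd_root_iff odd_root_le_iff)
  then have "0 \<le> \<gamma>" "\<gamma> \<le> \<gamma>_max"
    using \<Delta>_pos by (simp_all add: zero_le_mult_iff)
  moreover have "\<alpha> ^ n \<le> 1"
    using \<alpha>_pos \<alpha>_less by (intro power_le_one) auto
  ultimately have \<gamma>: "0 \<le> \<gamma>" "\<gamma> \<le> 1" "\<gamma> \<le> \<alpha> ^ n" "\<gamma> \<le> zgap"
    by (auto simp: \<gamma>_max_def)
  show channel: "is_channel n (Zchan n \<gamma>)"
    using \<gamma>(1,2) by (rule Zchan_is_channel)
  have XZ: "PcXZ n p r \<alpha> (Zchan n \<gamma>) \<le> \<epsilon> ^ n"
    using PcXZ_Zchan_le[OF \<gamma>(1,2,4)] \<gamma>\<Delta> by simp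
  then show "root n (PcXZ n p r \<alpha> (Zchan n \<gamma>)) \<le> \<epsilon>"
    using odd_n by (simp add: odd_root_le_iff)
  show YZ: "PcYZ n p r \<alpha> (Zchan n \<gamma>) = 1 - \<gamma> * Py One"
    using PcYZ_Zchan[OF \<gamma>(1,3)] .
  have "PcYZ n p r \<alpha> W \<le> 1 - \<gamma> * \<alpha> ^ n"
    if "is_channel n W" "PcXZ n p r \<alpha> W \<le> \<epsilon> ^ n" for W
  proof -
    have "\<gamma> * \<Delta> \<le> \<Delta> / \<alpha> ^ n * (1 - PcYZ n p r \<alpha> W)"
      using PcXY_minus_PcXZ_le[OF that(1)] that(2) \<gamma>\<Delta> by linarith
    then have "\<gamma> * \<alpha> ^ n * \<Delta> \<le> (1 - PcYZ n p r \<alpha> W) * \<Delta>"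
      using \<alpha>_pos by (simp add: field_simps)
    then show ?thesis
      using \<Delta>_pos by simp
  qed
  then show "1 - \<gamma> * Py One \<le> hlow n p r \<alpha> \<epsilon> ^ n" "hlow n p r \<alpha> \<epsilon> ^ n \<le> 1 - \<gamma> * \<alpha> ^ n"
    using hlow_pow_bounds[OF odd_n channel XZ] YZ by auto
qed

end

theorem theorem5:
  fixes n :: nat and p r \<alpha> :: real
  assumes "odd n"
    and "1/2 \<le> p" "p < 1"
    and "0 < \<alpha>" "\<alpha> < 1/2"
    and "0 \<le> r" "r < 1"
    and "(1 - \<alpha>) * (1 - p) > \<alpha> * p"
    and "r / (1 - r) < (\<alpha> / (1 - \<alpha>)) ^ (n - 1)"
  shows "\<exists>\<epsilon>L. root n (PcX n p r) \<le> \<epsilon>L \<and> \<epsilon>L < root n (PcXY n p r \<alpha>) \<and>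
    (\<forall>\<epsilon>. \<epsilon>L \<le> \<epsilon> \<and> \<epsilon> \<le> root n (PcXY n p r \<alpha>) \<longrightarrow>
       1 - zeta n p r \<alpha> \<epsilon> * PY n p r \<alpha> (ones n) \<le> (hlow n p r \<alpha> \<epsilon>) ^ n
     \<and> (hlow n p r \<alpha> \<epsilon>) ^ n \<le> 1 - zeta n p r \<alpha> \<epsilon> * \<alpha> ^ n
     \<and> is_channel n (Zchan n (zeta n p r \<alpha> \<epsilon>))
     \<and> root n (PcXZ n p r \<alpha> (Zchan n (zeta n p r \<alpha> \<epsilon>))) \<le> \<epsilon>
     \<and> PcYZ n p r \<alpha> (Zchan n (zeta n p r \<alpha> \<epsilon>)) = 1 - zeta n p r \<alpha> \<epsilon> * PY n p r \<alpha> (ones n))"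
proof -
  interpret markov_bsc n p r \<alpha>
    using assms by unfold_locales
  define \<epsilon>L where "\<epsilon>L = root n (PcXY n p r \<alpha> - \<gamma>_max * \<Delta>)"
  have "\<gamma>_max \<le> (PcXY n p r \<alpha> - PcX n p r) / \<Delta>"
    by (simp add: \<gamma>_max_def)
  then have "\<gamma>_max * \<Delta> \<le> PcXY n p r \<alpha> - PcX n p r"
    using \<Delta>_pos by (simp add: pos_le_divide_eq)
  then have "root n (PcX n p r) \<le> \<epsilon>L"
    using n_pos by (simp add: \<epsilon>L_def)
  moreover have "\<epsilon>L < root n (PcXY n p r \<alpha>)"
    using n_pos \<gamma>_max_pos \<Delta>_pos by (simp add: \<epsilon>L_def)
  ultimately show ?thesis
    using Zchan_zeta_sandwich unfolding \<epsilon>L_def by blast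
qed

end
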